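(* Let $P$ be a countable multiset of primes, $G=\bigoplus_{p\in P}\mathbb{F}_p$, and let $X$ be an ergodic $G$-system. Let $F:X\to S^1$ be a phase polynomial of degree $<k$ taking values in $C_n$, where $n=p_1\cdots p_j$ for primes $p_1,\dots,p_j$ with $k<p_i$ for all $i$. Then for every $g\in G$, $\prod_{t=0}^{n-1}F(T_g^tx)=1$ for a.e. $x\in X$.
   Context: $C_n$ is the group of $n$-th roots of unity. A $G$-system is a compact metrizable probability space with measure-preserving $G$-action $(T_g)$; ergodic: only constants invariant. Phase polynomial of degree $<k$: $\Delta_{h_1}\cdots\Delta_{h_k}F=1$ a.e. for all $h_i\in G$, where $\Delta_h\phi=(\phi\circ T_h)/\phi$. *)

theory Defs
  imports "HOL-Probability.Probability"
begin

text \<open>The countable multiset of primes P is given by an index set I of naturals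
  (finite or infinite) and a labelling p, with p i prime for i in I.
  G = direct sum over i in I of F_(p i): finitely supported functions g with
  g i in {0..<p i} for i in I and g i = 0 outside I.\<close>

definition dsum_carrier :: "nat set \<Rightarrow> (nat \<Rightarrow> nat) \<Rightarrow> (nat \<Rightarrow> nat) set" where
  "dsum_carrier I p = {g. finite {i. g i \<noteq> 0} \<and> (\<forall>i. g i \<noteq> 0 \<longrightarrow> i \<in> I) \<and> (\<forall>i\<in>I. g i < p i)}"

definition dsum_add :: "nat set \<Rightarrow> (nat \<Rightarrow> nat) \<Rightarrow> (nat \<Rightarrow> nat) \<Rightarrow> (nat \<Rightarrow> nat) \<Rightarrow> (nat \<Rightarrow> nat)" where
  "dsum_add I p g h = (\<lambda>i. if i \<in> I then (g i + h i) mod p i else 0)"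

definition mp_action :: "nat set \<Rightarrow> (nat \<Rightarrow> nat) \<Rightarrow> 'a measure \<Rightarrow> ((nat \<Rightarrow> nat) \<Rightarrow> 'a \<Rightarrow> 'a) \<Rightarrow> bool" where
  "mp_action I p M T \<longleftrightarrow>
     (\<forall>g\<in>dsum_carrier I p. T g \<in> measurable M M \<and> distr M M (T g) = M) \<and>
     (\<forall>x\<in>space M. T (\<lambda>_. 0) x = x) \<and>
     (\<forall>g\<in>dsum_carrier I p. \<forall>h\<in>dsum_carrier I p. \<forall>x\<in>space M.
         T (dsum_add I p g h) x = T g (T h x))"

definition ergodic_action :: "nat set \<Rightarrow> (nat \<Rightarrow> nat) \<Rightarrow> 'a measure \<Rightarrow> ((nat \<Rightarrow> nat) \<Rightarrow> 'a \<Rightarrow> 'a) \<Rightarrow> bool" where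
  "ergodic_action I p M T \<longleftrightarrow>
     (\<forall>f :: 'a \<Rightarrow> real. f \<in> borel_measurable M \<longrightarrow>
        (\<forall>g\<in>dsum_carrier I p. AE x in M. f (T g x) = f x) \<longrightarrow>
        (\<exists>c. AE x in M. f x = c))"

definition mder :: "((nat \<Rightarrow> nat) \<Rightarrow> 'a \<Rightarrow> 'a) \<Rightarrow> (nat \<Rightarrow> nat) \<Rightarrow> ('a \<Rightarrow> complex) \<Rightarrow> 'a \<Rightarrow> complex" where
  "mder T h \<phi> = (\<lambda>x. \<phi> (T h x) / \<phi> x)"

definition phase_poly_lt :: "nat set \<Rightarrow> (nat \<Rightarrow> nat) \<Rightarrow> 'a measure \<Rightarrow> ((nat \<Rightarrow> nat) \<Rightarrow> 'a \<Rightarrow> 'a)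
    \<Rightarrow> nat \<Rightarrow> ('a \<Rightarrow> complex) \<Rightarrow> bool" where
  "phase_poly_lt I p M T k F \<longleftrightarrow>
     F \<in> borel_measurable M \<and> (\<forall>x\<in>space M. cmod (F x) = 1) \<and>
     (\<forall>hs. length hs = k \<longrightarrow> set hs \<subseteq> dsum_carrier I p \<longrightarrow>
        (AE x in M. foldr (mder T) hs F x = 1))"

end

theory Submission
  imports Defs
begin

text \<open>Fix g and a point x, and put f t = F (T_g^t x). Because T_g preserves the measure, for
  almost every x the identity Delta_g ... Delta_g F = 1 holds at every point of the orbit, so the
  k-th multiplicative difference of f vanishes identically, while f takes values in C_n.
  Summation by parts against binomial weights, by induction on k, shows that
  prod_{t<n} f t ^ (t choose j) is a product of n-th roots of unity raised to the powers
  n choose m with 0 < m \<le> j + k; every prime factor of n exceeds k, so n divides each of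
  these binomial coefficients and the product is 1.\<close>

definition mdiff :: "(nat \<Rightarrow> 'a::field) \<Rightarrow> nat \<Rightarrow> 'a" where
  "mdiff f t = f (Suc t) / f t"

lemma prod_power_choose_mdiff_telescope:
  fixes f :: "nat \<Rightarrow> 'a::field"
  assumes nonzero: "\<And>t. f t \<noteq> 0"
  shows "(\<Prod>t<N. f t ^ (t choose j)) * (\<Prod>t<N. mdiff f t ^ (Suc t choose Suc j))
         = f N ^ (N choose Suc j)"
proof (induction N)
  case 0
  then show ?case by simp
next
  case (Suc N)
  have "(\<Prod>t<Suc N. f t ^ (t choose j)) * (\<Prod>t<Suc N. mdiff f t ^ (Suc t choose Suc j))
      = f N ^ (N choose Suc j) * (f N ^ (N choose j) * mdiff f N ^ (Suc N choose Suc j))"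
    using Suc.IH by (simp add: algebra_simps)
  also have "\<dots> = (f N * mdiff f N) ^ (Suc N choose Suc j)"
    by (simp add: power_add power_mult_distrib algebra_simps)
  also have "\<dots> = f (Suc N) ^ (Suc N choose Suc j)"
    using nonzero by (simp add: mdiff_def del: binomial_Suc_Suc)
  finally show ?case .
qed

lemma prod_power_choose_eq_1_if_mdiff_iterate_eq_1:
  fixes f :: "nat \<Rightarrow> 'a::field"
  assumes "\<And>t. f t ^ n = 1"
    and "\<And>t. (mdiff ^^ k) f t = 1"
    and "\<And>m. 0 < m \<Longrightarrow> m \<le> j + k \<Longrightarrow> n dvd (n choose m)"
  shows "(\<Prod>t<n. f t ^ (t choose j)) = 1"
proof (cases "n = 0")
  case False
  with assms show ?thesis
  proof (induction k arbitrary: f j)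
    case 0
    then show ?case by simp
  next
    case (Suc k)
    have nonzero: "f t \<noteq> 0" for t
      using Suc.prems(1)[of t] \<open>n \<noteq> 0\<close> by (metis power_0_left one_neq_zero)
    let ?g = "mdiff f"
    have g_roots: "?g t ^ n = 1" for t
      using Suc.prems(1) by (simp add: mdiff_def power_divide)
    have g_diff: "(mdiff ^^ k) ?g t = 1" for t
      using Suc.prems(2) by (simp add: funpow_Suc_right del: funpow.simps)
    have "(\<Prod>t<n. ?g t ^ (t choose j)) = 1" "(\<Prod>t<n. ?g t ^ (t choose Suc j)) = 1"
      using Suc.IH[OF g_roots g_diff] Suc.prems(3) \<open>n \<noteq> 0\<close> by simp_all
    then have "(\<Prod>t<n. ?g t ^ (Suc t choose Suc j)) = 1"
      by (simp add: power_add prod.distrib)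
    moreover have "f n ^ (n choose Suc j) = 1"
    proof -
      obtain c where "n choose Suc j = n * c"
        using Suc.prems(3)[of "Suc j"] by fastforce
      then show ?thesis using Suc.prems(1) by (simp add: power_mult)
    qed
    moreover have "(\<Prod>t<n. f t ^ (t choose j)) * (\<Prod>t<n. ?g t ^ (Suc t choose Suc j))
        = f n ^ (n choose Suc j)"
      by (rule prod_power_choose_mdiff_telescope) (rule nonzero)
    ultimately show ?case by simp
  qed
qed simp

lemma dvd_choose_self_if_coprime:
  fixes n m :: nat
  assumes "0 < m" and "coprime n m"
  shows "n dvd (n choose m)"
proof -
  have "n dvd m * (n choose m)"
    using times_binomial_minus1_eq[OF \<open>0 < m\<close>] by simp
  then show ?thesis
    using \<open>coprime n m\<close> by (simp add: coprime_dvd_mult_right_iff)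
qed

lemma coprime_prod_list_if_primes_greater:
  fixes m :: nat
  assumes "\<forall>q\<in>set ps. prime q \<and> m < q" and "0 < m"
  shows "coprime (prod_list ps) m"
proof (rule prod_list_coprime_left)
  fix q assume "q \<in> set ps"
  with assms have "prime q" "m < q" by auto
  with \<open>0 < m\<close> have "\<not> q dvd m"
    by (auto dest: dvd_imp_le)
  with \<open>prime q\<close> show "coprime q m"
    by (simp add: prime_imp_coprime)
qed

lemma prod_eq_1_if_mdiff_iterate_eq_1:
  fixes f :: "nat \<Rightarrow> 'a::field"
  assumes roots: "\<And>t. f t ^ prod_list ps = 1"
    and diff: "\<And>t. (mdiff ^^ k) f t = 1"
    and primes_greater: "\<forall>q\<in>set ps. prime q \<and> k < q"
  shows "(\<Prod>t<prod_list ps. f t) = 1"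
proof -
  have "prod_list ps dvd (prod_list ps choose m)" if "0 < m" "m \<le> 0 + k" for m
  proof -
    have "\<forall>q\<in>set ps. prime q \<and> m < q"
      using that primes_greater by auto
    with \<open>0 < m\<close> show ?thesis
      by (simp add: dvd_choose_self_if_coprime coprime_prod_list_if_primes_greater)
  qed
  with roots diff have "(\<Prod>t<prod_list ps. f t ^ (t choose 0)) = 1"
    by (rule prod_power_choose_eq_1_if_mdiff_iterate_eq_1)
  then show ?thesis by simp
qed

lemma mder_iterate_along_orbit:
  "(mder T g ^^ k) F ((T g ^^ t) x) = (mdiff ^^ k) (\<lambda>t. F ((T g ^^ t) x)) t"
proof (induction k arbitrary: t)
  case 0
  then show ?case by simp
next
  case (Suc k)
  show ?case
    using Suc.IH[of t] Suc.IH[of "Suc t"] by (simp add: mder_def mdiff_def)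
qed

lemma AE_along_orbit_if_measure_preserving:
  assumes S: "S \<in> measurable M M" and preserving: "distr M M S = M"
    and P: "AE x in M. P x"
  shows "AE x in M. \<forall>t. P ((S ^^ t) x)"
proof -
  have distr_iterate: "distr M M (S ^^ t) = M" for t
  proof (induction t)
    case 0
    then show ?case by (simp add: distr_id2)
  next
    case (Suc t)
    have "distr M M (S ^^ Suc t) = distr (distr M M (S ^^ t)) M S"
      using distr_distr[OF S measurable_compose_n[OF S]] by (simp add: comp_def)
    then show ?case by (simp only: Suc.IH preserving)
  qed
  have "AE x in distr M M (S ^^ t). P x" for t
    using P by (simp only: distr_iterate)
  then have "AE x in M. P ((S ^^ t) x)" for t
    by (rule AE_distrD[OF measurable_compose_n[OF S]])
  then show ?thesis by (simp add: AE_all_countable)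
qed

theorem propositionB12:
  fixes M :: "'a::metric_space measure"
    and I :: "nat set" and p :: "nat \<Rightarrow> nat"
    and T :: "(nat \<Rightarrow> nat) \<Rightarrow> 'a \<Rightarrow> 'a"
    and F :: "'a \<Rightarrow> complex" and k n :: nat and ps :: "nat list"
  assumes primes: "\<forall>i\<in>I. prime (p i)"
    and prob: "prob_space M"
    and borel: "sets M = sets borel"
    and cpt: "compact (space M)"
    and act: "mp_action I p M T"
    and erg: "ergodic_action I p M T"
    and phase: "phase_poly_lt I p M T k F"
    and rootsn: "\<forall>x\<in>space M. F x ^ n = 1"
    and n_def: "n = prod_list ps"
    and ps_primes: "\<forall>q\<in>set ps. prime q \<and> k < q"
  shows "\<forall>g\<in>dsum_carrier I p. AE x in M. (\<Prod>t<n. F ((T g ^^ t) x)) = 1"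
proof
  fix g assume g: "g \<in> dsum_carrier I p"
  have Tg: "T g \<in> measurable M M" "distr M M (T g) = M"
    using act g by (auto simp: mp_action_def)
  have "length (replicate k g) = k" "set (replicate k g) \<subseteq> dsum_carrier I p"
    using g by auto
  then have "AE x in M. foldr (mder T) (replicate k g) F x = 1"
    using phase unfolding phase_poly_lt_def by blast
  then have "AE x in M. \<forall>t. foldr (mder T) (replicate k g) F ((T g ^^ t) x) = 1"
    using AE_along_orbit_if_measure_preserving[OF Tg] by blast
  with AE_space show "AE x in M. (\<Prod>t<n. F ((T g ^^ t) x)) = 1"
  proof eventually_elim
    case (elim x)
    have "F ((T g ^^ t) x) ^ prod_list ps = 1" for t
      using rootsn n_def measurable_space[OF measurable_compose_n[OF Tg(1)] elim(1)] by blast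
    moreover have "(mdiff ^^ k) (\<lambda>t. F ((T g ^^ t) x)) t = 1" for t
      using elim(2) by (simp add: mder_iterate_along_orbit)
    ultimately show ?case
      unfolding n_def by (rule prod_eq_1_if_mdiff_iterate_eq_1) (rule ps_primes)
  qed
qed

end
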